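(* Let $k$ be a positive integer, $a\ge 1$ an integer and $G=K_a\,\square\,K_a$. Then $\gamma_{P,k}(G)=a-k$ if $a\ge k+2$, and $\gamma_{P,k}(G)=1$ otherwise.
   Context: $K_a$ is the complete graph on $a$ vertices and $\square$ denotes the Cartesian product of graphs. $N_G[v]$ is the closed neighbourhood of $v$, and $N_G[S]$ the union of closed neighbourhoods of vertices of $S$. For $S\subseteq V(G)$, define $\mathcal{P}^{0}_{G,k}(S)=N_G[S]$ and $\mathcal{P}^{i+1}_{G,k}(S)=\bigcup\{N_G[v] : v\in \mathcal{P}^{i}_{G,k}(S),\ |N_G[v]\setminus \mathcal{P}^{i}_{G,k}(S)|\le k\}$; these increase and stabilize to $\mathcal{P}^{\infty}_{G,k}(S)$. $S$ is a $k$-power dominating set if $\mathcal{P}^{\infty}_{G,k}(S)=V(G)$; $\gamma_{P,k}(G)$ is the minimum size of such a set. *)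

theory Defs
  imports Main
begin

text \<open>A (simple) graph is given by a vertex set V and a symmetric irreflexive
adjacency relation E.\<close>

definition closed_nbhd :: "'a set \<Rightarrow> ('a \<Rightarrow> 'a \<Rightarrow> bool) \<Rightarrow> 'a \<Rightarrow> 'a set" where
  "closed_nbhd V E v = insert v {u \<in> V. E v u}"

definition closed_nbhd_set :: "'a set \<Rightarrow> ('a \<Rightarrow> 'a \<Rightarrow> bool) \<Rightarrow> 'a set \<Rightarrow> 'a set" where
  "closed_nbhd_set V E S = (\<Union>v\<in>S. closed_nbhd V E v)"

fun pow_obs :: "'a set \<Rightarrow> ('a \<Rightarrow> 'a \<Rightarrow> bool) \<Rightarrow> nat \<Rightarrow> 'a set \<Rightarrow> nat \<Rightarrow> 'a set" where
  "pow_obs V E k S 0 = closed_nbhd_set V E S"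
| "pow_obs V E k S (Suc i) =
     (\<Union>{closed_nbhd V E v | v. v \<in> pow_obs V E k S i \<and>
          card (closed_nbhd V E v - pow_obs V E k S i) \<le> k})"

definition pow_obs_inf :: "'a set \<Rightarrow> ('a \<Rightarrow> 'a \<Rightarrow> bool) \<Rightarrow> nat \<Rightarrow> 'a set \<Rightarrow> 'a set" where
  "pow_obs_inf V E k S = (\<Union>i. pow_obs V E k S i)"

definition k_pds :: "'a set \<Rightarrow> ('a \<Rightarrow> 'a \<Rightarrow> bool) \<Rightarrow> nat \<Rightarrow> 'a set \<Rightarrow> bool" where
  "k_pds V E k S \<longleftrightarrow> S \<subseteq> V \<and> pow_obs_inf V E k S = V"

definition k_power_domination_number :: "'a set \<Rightarrow> ('a \<Rightarrow> 'a \<Rightarrow> bool) \<Rightarrow> nat \<Rightarrow> nat" where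
  "k_power_domination_number V E k = (LEAST n. \<exists>S. k_pds V E k S \<and> card S = n)"

definition rook_vertices :: "nat \<Rightarrow> (nat \<times> nat) set" where
  "rook_vertices a = {0..<a} \<times> {0..<a}"

definition rook_adj :: "nat \<times> nat \<Rightarrow> nat \<times> nat \<Rightarrow> bool" where
  "rook_adj p q \<longleftrightarrow> (fst p = fst q \<and> snd p \<noteq> snd q) \<or> (snd p = snd q \<and> fst p \<noteq> fst q)"

end

theory Submission
  imports Defs
begin

text \<open>For the upper bound, \<open>m \<ge> a - k\<close> diagonal vertices dominate the first \<open>m\<close> rows and
columns, after which every vertex of row 0 has at most \<open>a - m \<le> k\<close> unobserved neighbours
and observes its whole column. For the lower bound, let \<open>R\<close> and \<open>C\<close> be the rows and columns
met by a set \<open>S\<close> with \<open>|S| + k < a\<close>. Then more than \<open>k\<close> rows avoid \<open>R\<close> and more than \<open>k\<close>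
columns avoid \<open>C\<close>, so every vertex in a row of \<open>R\<close> or a column of \<open>C\<close> either has its whole
closed neighbourhood there or has more than \<open>k\<close> neighbours outside: the union of these rows
and columns is never left by the propagation. A nonempty set is needed since the empty set
observes nothing.\<close>

lemma closed_nbhd_subset: "v \<in> V \<Longrightarrow> closed_nbhd V E v \<subseteq> V"
  unfolding closed_nbhd_def by auto

lemma finite_closed_nbhd: "finite V \<Longrightarrow> finite (closed_nbhd V E v)"
  unfolding closed_nbhd_def by auto

lemma pow_obs_subset:
  assumes "S \<subseteq> V"
  shows "pow_obs V E k S i \<subseteq> V"
proof (induction i)
  case 0
  have "closed_nbhd V E v \<subseteq> V" if "v \<in> S" for v
    using that assms by (intro closed_nbhd_subset) blast
  then show ?case by (auto simp: closed_nbhd_set_def)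
next
  case (Suc i)
  show ?case
  proof
    fix x assume "x \<in> pow_obs V E k S (Suc i)"
    then obtain v where "v \<in> pow_obs V E k S i" "x \<in> closed_nbhd V E v" by auto
    then show "x \<in> V" using Suc closed_nbhd_subset[of v V E] by blast
  qed
qed

lemma pow_obs_SucI:
  assumes "v \<in> pow_obs V E k S i" "card (closed_nbhd V E v - pow_obs V E k S i) \<le> k"
    and "x \<in> closed_nbhd V E v"
  shows "x \<in> pow_obs V E k S (Suc i)"
  using assms by auto

lemma pow_obs_empty: "pow_obs V E k {} i = {}"
  by (induction i) (auto simp: closed_nbhd_set_def)

lemma k_pds_nonempty: "V \<noteq> {} \<Longrightarrow> k_pds V E k S \<Longrightarrow> S \<noteq> {}"
  by (auto simp: k_pds_def pow_obs_inf_def pow_obs_empty)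

lemma finite_k_pds: "finite V \<Longrightarrow> k_pds V E k S \<Longrightarrow> finite S"
  unfolding k_pds_def by (auto intro: finite_subset)

lemma card_k_pds_pos:
  assumes "finite V" "V \<noteq> {}" "k_pds V E k S"
  shows "0 < card S"
  using k_pds_nonempty[OF assms(2,3)] finite_k_pds[OF assms(1,3)] by (simp add: card_gt_0_iff)

lemma k_power_domination_number_eqI:
  assumes "k_pds V E k S" "card S = m" and "\<And>S. k_pds V E k S \<Longrightarrow> m \<le> card S"
  shows "k_power_domination_number V E k = m"
  unfolding k_power_domination_number_def using assms by (intro Least_equality) auto

lemma pow_obs_subset_if_closed:
  assumes "finite V" and "closed_nbhd_set V E S \<subseteq> P"
    and closed: "\<And>v. v \<in> P \<Longrightarrow> card (closed_nbhd V E v - P) \<le> k \<Longrightarrow> closed_nbhd V E v \<subseteq> P"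
  shows "pow_obs V E k S i \<subseteq> P"
proof (induction i)
  case 0
  show ?case using assms(2) by simp
next
  case (Suc i)
  show ?case
  proof
    fix x assume "x \<in> pow_obs V E k S (Suc i)"
    then obtain v where v: "v \<in> pow_obs V E k S i"
      and small: "card (closed_nbhd V E v - pow_obs V E k S i) \<le> k"
      and x: "x \<in> closed_nbhd V E v" by auto
    have "card (closed_nbhd V E v - P) \<le> card (closed_nbhd V E v - pow_obs V E k S i)"
      using Suc finite_closed_nbhd[OF \<open>finite V\<close>] by (intro card_mono) auto
    with small have "card (closed_nbhd V E v - P) \<le> k" by linarith
    moreover have "v \<in> P" using Suc v by blast
    ultimately show "x \<in> P" using closed x by blast
  qed
qed

lemma k_pds_subset_if_closed:
  assumes "k_pds V E k S" "finite V" "closed_nbhd_set V E S \<subseteq> P"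
    and "\<And>v. v \<in> P \<Longrightarrow> card (closed_nbhd V E v - P) \<le> k \<Longrightarrow> closed_nbhd V E v \<subseteq> P"
  shows "V \<subseteq> P"
proof -
  have "pow_obs V E k S i \<subseteq> P" for i
    using pow_obs_subset_if_closed[of V E S P k] assms(2-4) by presburger
  then show ?thesis using assms(1) unfolding k_pds_def pow_obs_inf_def by blast
qed

definition rook_lines :: "nat \<Rightarrow> nat set \<Rightarrow> nat set \<Rightarrow> (nat \<times> nat) set" where
  "rook_lines a R C = {x \<in> rook_vertices a. fst x \<in> R \<or> snd x \<in> C}"

lemma mem_rook_vertices: "x \<in> rook_vertices a \<longleftrightarrow> fst x < a \<and> snd x < a"
  unfolding rook_vertices_def by (simp add: mem_Times_iff)

lemma finite_rook_vertices: "finite (rook_vertices a)"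
  unfolding rook_vertices_def by simp

lemma rook_closed_nbhd:
  assumes "v \<in> rook_vertices a"
  shows "closed_nbhd (rook_vertices a) rook_adj v =
         {x \<in> rook_vertices a. fst x = fst v \<or> snd x = snd v}"
  using assms unfolding closed_nbhd_def rook_adj_def by (auto simp: prod_eq_iff)

lemma rook_closed_nbhd_set:
  assumes "S \<subseteq> rook_vertices a"
  shows "closed_nbhd_set (rook_vertices a) rook_adj S = rook_lines a (fst ` S) (snd ` S)"
proof -
  have "closed_nbhd (rook_vertices a) rook_adj v =
          {x \<in> rook_vertices a. fst x = fst v \<or> snd x = snd v}" if "v \<in> S" for v
    using that assms by (intro rook_closed_nbhd) blast
  then show ?thesis unfolding closed_nbhd_set_def rook_lines_def by auto
qed

lemma rook_diagonal_k_pds: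
  assumes "1 \<le> m" "m \<le> a" "a \<le> m + k"
  shows "k_pds (rook_vertices a) rook_adj k ((\<lambda>i. (i, i)) ` {0..<m})"
proof -
  let ?V = "rook_vertices a" and ?S = "(\<lambda>i. (i, i)) ` {0..<m}"
  let ?P0 = "pow_obs ?V rook_adj k ?S 0"
  have SV: "?S \<subseteq> ?V" using assms by (auto simp: mem_rook_vertices)
  have P0: "?P0 = rook_lines a {0..<m} {0..<m}"
    using rook_closed_nbhd_set[OF SV] by (simp add: image_image)
  have "x \<in> pow_obs ?V rook_adj k ?S 1" if x: "x \<in> ?V" for x
  proof -
    let ?u = "(0, snd x)"
    have u: "?u \<in> ?V" using x assms by (simp add: mem_rook_vertices)
    have observed: "?u \<in> ?P0" using P0 u assms unfolding rook_lines_def by simp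
    have "closed_nbhd ?V rook_adj ?u - ?P0 \<subseteq> {m..<a} \<times> {snd x}"
      unfolding P0 using assms by (auto simp: rook_closed_nbhd[OF u] rook_lines_def mem_rook_vertices)
    then have "card (closed_nbhd ?V rook_adj ?u - ?P0) \<le> card ({m..<a} \<times> {snd x})"
      by (intro card_mono) auto
    also have "\<dots> \<le> k" using assms by (simp add: card_cartesian_product)
    finally have small: "card (closed_nbhd ?V rook_adj ?u - ?P0) \<le> k" .
    have "x \<in> closed_nbhd ?V rook_adj ?u" using x by (simp add: rook_closed_nbhd[OF u])
    then show ?thesis using pow_obs_SucI[OF observed small] by simp
  qed
  then show ?thesis
    using SV pow_obs_subset[OF SV] unfolding k_pds_def pow_obs_inf_def by blast
qed

lemma rook_lines_closed:
  assumes R: "k < card ({0..<a} - R)" and C: "k < card ({0..<a} - C)"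
    and v: "v \<in> rook_lines a R C"
    and small: "card (closed_nbhd (rook_vertices a) rook_adj v - rook_lines a R C) \<le> k"
  shows "closed_nbhd (rook_vertices a) rook_adj v \<subseteq> rook_lines a R C"
proof -
  let ?N = "closed_nbhd (rook_vertices a) rook_adj v"
  have vV: "v \<in> rook_vertices a" using v unfolding rook_lines_def by simp
  have card_le: "card A \<le> k" if "A \<subseteq> ?N - rook_lines a R C" for A
  proof -
    have "finite (?N - rook_lines a R C)" using finite_closed_nbhd[OF finite_rook_vertices] by simp
    then show ?thesis using small card_mono[OF _ that] by linarith
  qed
  have "fst v \<in> R"
  proof (rule ccontr)
    assume "fst v \<notin> R"
    then have "{fst v} \<times> ({0..<a} - C) \<subseteq> ?N - rook_lines a R C"
      using vV by (auto simp: rook_closed_nbhd rook_lines_def mem_rook_vertices)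
    then have "card ({fst v} \<times> ({0..<a} - C)) \<le> k" by (rule card_le)
    with C show False by (simp add: card_cartesian_product)
  qed
  moreover have "snd v \<in> C"
  proof (rule ccontr)
    assume "snd v \<notin> C"
    then have "({0..<a} - R) \<times> {snd v} \<subseteq> ?N - rook_lines a R C"
      using vV by (auto simp: rook_closed_nbhd rook_lines_def mem_rook_vertices)
    then have "card (({0..<a} - R) \<times> {snd v}) \<le> k" by (rule card_le)
    with R show False by (simp add: card_cartesian_product)
  qed
  ultimately show ?thesis using vV by (auto simp: rook_closed_nbhd rook_lines_def)
qed

lemma rook_k_pds_card_ge:
  assumes pds: "k_pds (rook_vertices a) rook_adj k S"
  shows "a \<le> card S + k"
proof (rule ccontr)
  assume "\<not> a \<le> card S + k"
  have SV: "S \<subseteq> rook_vertices a" using pds unfolding k_pds_def by simp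
  have finS: "finite S" using finite_k_pds[OF finite_rook_vertices pds] .
  have lines_left: "k < card ({0..<a} - f ` S)" for f :: "nat \<times> nat \<Rightarrow> nat"
  proof -
    have "a - card (f ` S) \<le> card ({0..<a} - f ` S)"
      using diff_card_le_card_Diff[of "f ` S" "{0..<a}"] finS by simp
    moreover have "card (f ` S) \<le> card S" using finS by (rule card_image_le)
    ultimately show ?thesis using \<open>\<not> a \<le> card S + k\<close> by linarith
  qed
  have covered: "rook_vertices a \<subseteq> rook_lines a (fst ` S) (snd ` S)"
    using k_pds_subset_if_closed[OF pds finite_rook_vertices _ rook_lines_closed[OF lines_left lines_left]]
      rook_closed_nbhd_set[OF SV] by simp
  obtain r c where "r \<in> {0..<a} - fst ` S" "c \<in> {0..<a} - snd ` S"
    using lines_left[of fst] lines_left[of snd] by (metis card.empty ex_in_conv not_less0)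
  then have "(r, c) \<in> rook_vertices a - rook_lines a (fst ` S) (snd ` S)"
    by (auto simp: rook_lines_def mem_rook_vertices)
  with covered show False by blast
qed

theorem mainTheorem5:
  fixes k a :: nat
  assumes "k \<ge> 1" and "a \<ge> 1"
  shows "k_power_domination_number (rook_vertices a) rook_adj k =
           (if a \<ge> k + 2 then a - k else 1)"
proof -
  define m where "m = (if a \<ge> k + 2 then a - k else 1)"
  have m: "1 \<le> m" "m \<le> a" "a \<le> m + k" using assms unfolding m_def by auto
  show ?thesis unfolding m_def[symmetric]
  proof (rule k_power_domination_number_eqI)
    show "k_pds (rook_vertices a) rook_adj k ((\<lambda>i. (i, i)) ` {0..<m})"
      using rook_diagonal_k_pds[OF m] .
    show "card ((\<lambda>i. (i, i)) ` {0..<m}) = m"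
      by (subst card_image) (auto simp: inj_on_def)
  next
    fix S assume pds: "k_pds (rook_vertices a) rook_adj k S"
    have "rook_vertices a \<noteq> {}" using assms unfolding rook_vertices_def by auto
    then have "0 < card S" using card_k_pds_pos[OF finite_rook_vertices _ pds] by simp
    then show "m \<le> card S" using rook_k_pds_card_ge[OF pds] unfolding m_def by auto
  qed
qed

end
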